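(* Let $X$ be a separable Banach space, $X\ne\{0\}$, and let $E_X$, $(e^X_n)$, $Q_X$ be as in the context. Let $(v_k)$ be a semi-normalized block sequence of $(e^X_n)$ such that $\|Q_X(v_k)\|_X\le 2^{-k}$ for every $k\in\mathbb{N}$. Then $(v_k)$ is equivalent to the standard unit vector basis of $c_0$.
   Context: Given a separable Banach space $X\neq\{0\}$ and a sequence $(x_n)$ (repetitions allowed) in the unit sphere of $X$ which is norm dense in the unit sphere, $E_X$ is the completion of $c_{00}(\mathbb{N})$ under the norm $\|z\|_{E_X}=\sup_{m\in\mathbb{N}}\|\sum_{n=0}^m z(n)x_n\|_X$; $(e^X_n)$ is the standard unit vector basis of $c_{00}(\mathbb{N})$ viewed in $E_X$ (a normalized monotone Schauder basis of $E_X$); $Q_X:E_X\to X$ is the unique bounded linear operator with $Q_X(e^X_n)=x_n$. A sequence is semi-normalized if its norms are bounded above and bounded away from $0$. *)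

theory Defs
  imports "HOL-Analysis.Analysis"
begin

text \<open>Elements of E_X are represented as scalar sequences z :: nat => real.
  The completion of c00 under the norm below is (isometrically) the space of
  those z for which the series sum_n z(n) x_n converges in X.\<close>

definition EX_space :: "(nat \<Rightarrow> 'a::real_normed_vector) \<Rightarrow> (nat \<Rightarrow> real) set" where
  "EX_space xs = {z. summable (\<lambda>n. z n *\<^sub>R xs n)}"

definition EX_norm :: "(nat \<Rightarrow> 'a::real_normed_vector) \<Rightarrow> (nat \<Rightarrow> real) \<Rightarrow> real" where
  "EX_norm xs z = (SUP m. norm (\<Sum>n\<le>m. z n *\<^sub>R xs n))"

definition QX :: "(nat \<Rightarrow> 'a::real_normed_vector) \<Rightarrow> (nat \<Rightarrow> real) \<Rightarrow> 'a" where
  "QX xs z = (\<Sum>n. z n *\<^sub>R xs n)"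

definition block_sequence :: "(nat \<Rightarrow> nat \<Rightarrow> real) \<Rightarrow> bool" where
  "block_sequence v \<longleftrightarrow>
     (\<forall>k. finite {n. v k n \<noteq> 0} \<and> (\<exists>n. v k n \<noteq> 0)) \<and>
     (\<forall>k i j. v k i \<noteq> 0 \<longrightarrow> v (Suc k) j \<noteq> 0 \<longrightarrow> i < j)"

definition semi_normalized :: "('b \<Rightarrow> real) \<Rightarrow> bool" where
  "semi_normalized nv \<longleftrightarrow> (\<exists>c C. 0 < c \<and> (\<forall>k. c \<le> nv k \<and> nv k \<le> C))"

definition equiv_c0_basis :: "((nat \<Rightarrow> real) \<Rightarrow> real) \<Rightarrow> (nat \<Rightarrow> nat \<Rightarrow> real) \<Rightarrow> bool" where
  "equiv_c0_basis nrm v \<longleftrightarrow>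
     (\<exists>A B. 0 < A \<and> 0 < B \<and>
       (\<forall>N a. 0 < N \<longrightarrow>
          A * (MAX k\<in>{..<N}. \<bar>a k\<bar>) \<le> nrm (\<lambda>n. \<Sum>k<N. a k * v k n) \<and>
          nrm (\<lambda>n. \<Sum>k<N. a k * v k n) \<le> B * (MAX k\<in>{..<N}. \<bar>a k\<bar>)))"

end

theory Submission
  imports Defs
begin

(* Let (v_k) be a block sequence
   with c <= ||v_k|| <= C and ||Q_X v_k|| <= 2^-k, and w = sum_{k<N} a_k v_k, M = max|a_k|.

   Upper estimate: a partial sum of w at index m splits into the partial sums of the
   blocks v_k at m.  Such a partial sum vanishes if m lies before the support of v_k,
   equals Q_X v_k if m lies after it, and is bounded by C otherwise; the last case
   happens for at most one k.  Hence ||w|| <= (2 + C) M.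

   Lower estimate: a partial sum of a_j v_j is the difference of two partial sums of w
   (one ending inside the support of v_j, one ending just before it), so
   |a_j| ||v_j|| <= 2 ||w||; choosing j with |a_j| = M gives (c/2) M <= ||w||. *)

abbreviation supp :: "(nat \<Rightarrow> real) \<Rightarrow> nat set" where
  "supp z \<equiv> {n. z n \<noteq> 0}"

definition psum :: "(nat \<Rightarrow> 'a::real_normed_vector) \<Rightarrow> (nat \<Rightarrow> real) \<Rightarrow> nat \<Rightarrow> 'a" where
  "psum xs z m = (\<Sum>n\<le>m. z n *\<^sub>R xs n)"

text \<open>A finitely supported z has bounded partial sums, so its E_X-norm is a genuine
  supremum; no normalisation of the x_n is needed for this.\<close>

lemma psum_bounded:
  assumes fin: "finite (supp z)"
  shows "bdd_above (range (\<lambda>m. norm (psum xs z m)))"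
proof (rule bdd_aboveI2)
  fix m
  have "norm (psum xs z m) \<le> (\<Sum>n\<le>m. norm (z n *\<^sub>R xs n))"
    unfolding psum_def by (rule norm_sum)
  also have "\<dots> = (\<Sum>n\<in>{..m} \<inter> supp z. norm (z n *\<^sub>R xs n))"
    by (rule sum.mono_neutral_right) auto
  also have "\<dots> \<le> (\<Sum>n\<in>supp z. norm (z n *\<^sub>R xs n))"
    by (rule sum_mono2) (use fin in auto)
  finally show "norm (psum xs z m) \<le> (\<Sum>n\<in>supp z. norm (z n *\<^sub>R xs n))" .
qed

lemma EX_norm_ge_psum:
  assumes "finite (supp z)"
  shows "norm (psum xs z m) \<le> EX_norm xs z"
  unfolding EX_norm_def psum_def[symmetric]
  by (rule cSUP_upper) (use psum_bounded[OF assms] in auto)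

lemma EX_norm_le:
  assumes "\<And>m. norm (psum xs z m) \<le> B"
  shows "EX_norm xs z \<le> B"
  unfolding EX_norm_def psum_def[symmetric]
  by (rule cSUP_least) (use assms in auto)

lemma EX_norm_nonneg:
  assumes "finite (supp z)"
  shows "0 \<le> EX_norm xs z"
  using norm_ge_zero EX_norm_ge_psum[OF assms] by (rule order_trans)

lemma EX_norm_ge_initial_sum:
  assumes "finite (supp z)"
  shows "norm (\<Sum>n<p. z n *\<^sub>R xs n) \<le> EX_norm xs z"
proof (cases p)
  case 0
  then show ?thesis using EX_norm_nonneg[OF assms] by simp
next
  case (Suc p')
  then show ?thesis using EX_norm_ge_psum[OF assms, of xs p']
    by (simp add: lessThan_Suc_atMost psum_def)
qed

lemma psum_before_supp:
  assumes "finite (supp z)" "m < Min (supp z)"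
  shows "psum xs z m = 0"
proof -
  have "z n = 0" if "n \<le> m" for n
  proof (rule ccontr)
    assume "z n \<noteq> 0"
    then have "Min (supp z) \<le> n" using Min_le[OF assms(1)] by simp
    then show False using assms(2) that by simp
  qed
  then show ?thesis unfolding psum_def by (intro sum.neutral) simp
qed

lemma psum_after_supp:
  assumes "finite (supp z)" "Max (supp z) \<le> m"
  shows "psum xs z m = QX xs z"
proof -
  have "z n = 0" if "m < n" for n
  proof (rule ccontr)
    assume "z n \<noteq> 0"
    then have "n \<le> Max (supp z)" using Max_ge[OF assms(1)] by simp
    then show False using assms(2) that by simp
  qed
  then show ?thesis unfolding QX_def psum_def by (intro suminf_finite[symmetric]) auto
qed

lemma psum_lincomb:
  "psum xs (\<lambda>n. \<Sum>k<N. a k * v k n) m = (\<Sum>k<N. a k *\<^sub>R psum xs (v k) m)"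
proof -
  have "psum xs (\<lambda>n. \<Sum>k<N. a k * v k n) m = (\<Sum>n\<le>m. \<Sum>k<N. (a k * v k n) *\<^sub>R xs n)"
    unfolding psum_def by (simp add: scaleR_sum_left)
  also have "\<dots> = (\<Sum>k<N. \<Sum>n\<le>m. (a k * v k n) *\<^sub>R xs n)"
    by (rule sum.swap)
  finally show ?thesis
    unfolding psum_def by (simp add: scaleR_sum_right)
qed

lemma block_supp_finite: "block_sequence v \<Longrightarrow> finite (supp (v k))"
  unfolding block_sequence_def by blast

lemma block_supp_nonempty: "block_sequence v \<Longrightarrow> supp (v k) \<noteq> {}"
  unfolding block_sequence_def by blast

text \<open>The definition only compares consecutive blocks; by induction every earlier
  block lies entirely to the left of every later one.\<close>

lemma block_order:
  assumes block: "block_sequence v" and "k < l" "v k i \<noteq> 0" "v l j \<noteq> 0"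
  shows "i < j"
  using assms(2,4)
proof (induction l arbitrary: j)
  case 0
  then show ?case by simp
next
  case (Suc l)
  show ?case
  proof (cases "k = l")
    case True
    then show ?thesis using block assms(3) Suc.prems unfolding block_sequence_def by blast
  next
    case False
    then have "k < l" using Suc.prems by simp
    obtain n where n: "v l n \<noteq> 0" using block unfolding block_sequence_def by blast
    have "i < n" using Suc.IH[OF \<open>k < l\<close> n] .
    moreover have "n < j" using block n Suc.prems unfolding block_sequence_def by blast
    ultimately show ?thesis by simp
  qed
qed

lemma block_Max_less_Min:
  assumes block: "block_sequence v" and "k < l"
  shows "Max (supp (v k)) < Min (supp (v l))"
  using block_order[OF assms]
    Max_in[OF block_supp_finite[OF block] block_supp_nonempty[OF block]]
    Min_in[OF block_supp_finite[OF block] block_supp_nonempty[OF block]]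
  by blast

lemma block_straddle_unique:
  assumes block: "block_sequence v"
    and "Min (supp (v k)) \<le> m" "m < Max (supp (v k))"
    and "Min (supp (v l)) \<le> m" "m < Max (supp (v l))"
  shows "k = l"
  using block_Max_less_Min[OF block, of k l] block_Max_less_Min[OF block, of l k] assms(2-)
  by (cases k l rule: linorder_cases) auto

lemma lincomb_supp_finite:
  assumes block: "block_sequence v"
  shows "finite (supp (\<lambda>n. \<Sum>k<N. a k * v k n))"
proof (rule finite_subset)
  show "supp (\<lambda>n. \<Sum>k<N. a k * v k n) \<subseteq> (\<Union>k<N. supp (v k))"
  proof
    fix n assume "n \<in> supp (\<lambda>n. \<Sum>k<N. a k * v k n)"
    then have "(\<Sum>k<N. a k * v k n) \<noteq> 0" by simp
    then obtain k where "k < N" "a k * v k n \<noteq> 0"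
      by (meson lessThan_iff sum.not_neutral_contains_not_neutral)
    then show "n \<in> (\<Union>k<N. supp (v k))" by auto
  qed
  show "finite (\<Union>k<N. supp (v k))" using block_supp_finite[OF block] by auto
qed

lemma lincomb_on_block:
  assumes block: "block_sequence v" and "j < N"
    and "Min (supp (v j)) \<le> n" "n \<le> Max (supp (v j))"
  shows "(\<Sum>k<N. a k * v k n) = a j * v j n"
proof -
  have other: "a k * v k n = 0" if "k \<in> {..<N} - {j}" for k
  proof (rule ccontr)
    assume "a k * v k n \<noteq> 0"
    then have "n \<in> supp (v k)" by simp
    then have "Min (supp (v k)) \<le> n" "n \<le> Max (supp (v k))"
      using block_supp_finite[OF block] by auto
    then show False
      using that assms(3,4) block_Max_less_Min[OF block, of k j] block_Max_less_Min[OF block, of j k]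
      by (cases k j rule: linorder_cases) auto
  qed
  have "(\<Sum>k<N. a k * v k n) = a j * v j n + (\<Sum>k\<in>{..<N} - {j}. a k * v k n)"
    by (rule sum.remove) (use assms(2) in auto)
  also have "(\<Sum>k\<in>{..<N} - {j}. a k * v k n) = 0"
    using other by (intro sum.neutral) blast
  finally show ?thesis by simp
qed

subsection \<open>The upper estimate\<close>

lemma sum_indicator_subsingleton:
  fixes C :: real
  assumes "finite A" "0 \<le> C" and single: "\<And>k l. k \<in> K \<Longrightarrow> l \<in> K \<Longrightarrow> k = l"
  shows "(\<Sum>k\<in>A. if k \<in> K then C else 0) \<le> C"
proof -
  have "card (A \<inter> K) \<le> 1"
    using single card_le_Suc0_iff_eq[OF finite_Int[OF disjI1[OF assms(1)]]] by auto
  moreover have "(\<Sum>k\<in>A. if k \<in> K then C else 0) = real (card (A \<inter> K)) * C"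
    using assms(1) by (simp add: sum.If_cases Int_def)
  ultimately show ?thesis
    using assms(2) by (simp add: mult_left_le_one_le)
qed

lemma geometric_half_partial_sum: "(\<Sum>k<N. (1/2::real) ^ k) \<le> 2"
proof -
  have "(\<Sum>k<N. (1/2::real) ^ k) \<le> (\<Sum>k. (1/2::real) ^ k)"
    by (rule sum_le_suminf) (auto intro: summable_geometric)
  also have "\<dots> = 2" by (simp add: suminf_geometric)
  finally show ?thesis .
qed

lemma block_psum_bound:
  assumes block: "block_sequence v" and C: "EX_norm xs (v k) \<le> C"
    and small: "norm (QX xs (v k)) \<le> (1/2) ^ k"
  shows "norm (psum xs (v k) m) \<le>
           (1/2) ^ k + (if Min (supp (v k)) \<le> m \<and> m < Max (supp (v k)) then C else 0)"
proof -
  have fin: "finite (supp (v k))" by (rule block_supp_finite[OF block])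
  have half: "0 \<le> (1/2::real) ^ k" by simp
  show ?thesis
  proof (cases "Min (supp (v k)) \<le> m \<and> m < Max (supp (v k))")
    case True
    have "norm (psum xs (v k) m) \<le> C"
      using EX_norm_ge_psum[OF fin] C by (rule order_trans)
    moreover have "(if Min (supp (v k)) \<le> m \<and> m < Max (supp (v k)) then C else 0) = C"
      using True by (rule if_P)
    ultimately show ?thesis using half by linarith
  next
    case False
    then consider "m < Min (supp (v k))" | "Max (supp (v k)) \<le> m" by force
    then have "norm (psum xs (v k) m) \<le> (1/2) ^ k"
    proof cases
      case 1
      then show ?thesis using psum_before_supp[OF fin 1, of xs] half by simp
    next
      case 2
      then show ?thesis using psum_after_supp[OF fin 2, of xs] small by simp
    qed
    moreover have "(if Min (supp (v k)) \<le> m \<and> m < Max (supp (v k)) then C else 0) = 0"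
      using False by (rule if_not_P)
    ultimately show ?thesis by linarith
  qed
qed

lemma lincomb_psum_upper:
  assumes block: "block_sequence v"
    and C: "\<And>k. EX_norm xs (v k) \<le> C" and C0: "0 \<le> C"
    and small: "\<And>k. norm (QX xs (v k)) \<le> (1/2) ^ k"
    and M: "\<And>k. k < N \<Longrightarrow> \<bar>a k\<bar> \<le> M" and M0: "0 \<le> M"
  shows "norm (psum xs (\<lambda>n. \<Sum>k<N. a k * v k n) m) \<le> (2 + C) * M"
proof -
  define K where "K = {k. Min (supp (v k)) \<le> m \<and> m < Max (supp (v k))}"
  have "norm (psum xs (\<lambda>n. \<Sum>k<N. a k * v k n) m) \<le> (\<Sum>k<N. norm (a k *\<^sub>R psum xs (v k) m))"
    unfolding psum_lincomb by (rule norm_sum)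
  also have "\<dots> \<le> (\<Sum>k<N. M * ((1/2) ^ k + (if k \<in> K then C else 0)))"
  proof (rule sum_mono)
    fix k assume "k \<in> {..<N}"
    then show "norm (a k *\<^sub>R psum xs (v k) m) \<le> M * ((1/2) ^ k + (if k \<in> K then C else 0))"
      using M[of k] block_psum_bound[OF block C small, of k m] unfolding K_def
      by (simp add: mult_mono)
  qed
  also have "\<dots> = M * ((\<Sum>k<N. (1/2) ^ k) + (\<Sum>k<N. if k \<in> K then C else 0))"
    by (simp add: sum_distrib_left sum.distrib distrib_left)
  also have "\<dots> \<le> M * (2 + C)"
    using geometric_half_partial_sum
      sum_indicator_subsingleton[OF _ C0, of "{..<N}" K] block_straddle_unique[OF block] M0
    unfolding K_def by (intro mult_left_mono add_mono) auto
  finally show ?thesis by (simp add: mult.commute)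
qed

subsection \<open>The lower estimate\<close>

text \<open>Every partial sum of a_j v_j is a difference of two partial sums of the linear
  combination, hence bounded by twice its E_X-norm.\<close>

lemma lincomb_psum_lower:
  assumes block: "block_sequence v" and j: "j < N"
  shows "\<bar>a j\<bar> * norm (psum xs (v j) m) \<le> 2 * EX_norm xs (\<lambda>n. \<Sum>k<N. a k * v k n)"
proof -
  define w where "w = (\<lambda>n. \<Sum>k<N. a k * v k n)"
  define p where "p = Min (supp (v j))"
  define q where "q = Max (supp (v j))"
  have fin: "finite (supp (v j))" by (rule block_supp_finite[OF block])
  have "q \<in> supp (v j)"
    unfolding q_def using Max_in fin block_supp_nonempty[OF block] by blast
  then have pq: "p \<le> q" unfolding p_def by (rule Min_le[OF fin])
  have outside: "v j n = 0" if "n < p \<or> q < n" for n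
  proof (rule ccontr)
    assume "v j n \<noteq> 0"
    then have "p \<le> n" "n \<le> q" unfolding p_def q_def using fin by simp_all
    then show False using that by simp
  qed
  have wfin: "finite (supp w)" unfolding w_def by (rule lincomb_supp_finite[OF block])
  show ?thesis
  proof (cases "m < p")
    case True
    then show ?thesis
      using psum_before_supp[OF fin True[unfolded p_def], of xs] EX_norm_nonneg[OF wfin]
      unfolding w_def by simp
  next
    case False
    define m' where "m' = min m q"
    have "a j *\<^sub>R psum xs (v j) m = (\<Sum>n\<le>m. (a j * v j n) *\<^sub>R xs n)"
      unfolding psum_def by (simp add: scaleR_sum_right)
    also have "\<dots> = (\<Sum>n\<in>{p..m'}. (a j * v j n) *\<^sub>R xs n)"
      by (rule sum.mono_neutral_right) (auto simp: m'_def outside)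
    also have "\<dots> = (\<Sum>n\<in>{p..m'}. w n *\<^sub>R xs n)"
      using lincomb_on_block[OF block j] unfolding w_def p_def q_def m'_def
      by (intro sum.cong) auto
    also have "\<dots> = psum xs w m' - (\<Sum>n<p. w n *\<^sub>R xs n)"
    proof -
      have "{..m'} = {..<p} \<union> {p..m'}" using False pq unfolding m'_def by auto
      then show ?thesis unfolding psum_def by (simp add: sum.union_disjoint ivl_disj_int)
    qed
    finally have split: "a j *\<^sub>R psum xs (v j) m = psum xs w m' - (\<Sum>n<p. w n *\<^sub>R xs n)" .
    have "\<bar>a j\<bar> * norm (psum xs (v j) m) = norm (psum xs w m' - (\<Sum>n<p. w n *\<^sub>R xs n))"
      by (simp flip: split)
    also have "\<dots> \<le> norm (psum xs w m') + norm (\<Sum>n<p. w n *\<^sub>R xs n)"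
      by (rule norm_triangle_ineq4)
    also have "\<dots> \<le> 2 * EX_norm xs w"
      using EX_norm_ge_psum[OF wfin, of xs m'] EX_norm_ge_initial_sum[OF wfin, of xs p] by simp
    finally show ?thesis unfolding w_def .
  qed
qed

lemma lincomb_EX_norm_lower:
  assumes block: "block_sequence v" and j: "j < N"
  shows "\<bar>a j\<bar> * EX_norm xs (v j) \<le> 2 * EX_norm xs (\<lambda>n. \<Sum>k<N. a k * v k n)"
proof (cases "a j = 0")
  case True
  then show ?thesis using EX_norm_nonneg[OF lincomb_supp_finite[OF block]] by simp
next
  case False
  have "EX_norm xs (v j) \<le> 2 * EX_norm xs (\<lambda>n. \<Sum>k<N. a k * v k n) / \<bar>a j\<bar>"
    using lincomb_psum_lower[OF block j] False
    by (intro EX_norm_le) (simp add: field_simps mult.commute)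
  then show ?thesis using False by (simp add: field_simps)
qed

text \<open>Only the block structure, the semi-normalisation and the smallness of Q_X v_k
  enter the argument.\<close>

theorem proposition17:
  fixes xs :: "nat \<Rightarrow> 'a::banach"
    and v :: "nat \<Rightarrow> nat \<Rightarrow> real"
  assumes separable: "\<exists>D::'a set. countable D \<and> closure D = UNIV"
    and nontriv: "\<exists>y::'a. y \<noteq> 0"
    and sphere: "\<And>n. norm (xs n) = 1"
    and dense: "sphere 0 1 \<subseteq> closure (range xs)"
    and block: "block_sequence v"
    and seminorm: "semi_normalized (\<lambda>k. EX_norm xs (v k))"
    and small: "\<And>k. norm (QX xs (v k)) \<le> (1/2) ^ k"
  shows "equiv_c0_basis (EX_norm xs) v"
proof -
  obtain c C where c0: "0 < c" and cC: "\<And>k. c \<le> EX_norm xs (v k) \<and> EX_norm xs (v k) \<le> C"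
    using seminorm unfolding semi_normalized_def by blast
  have C0: "0 \<le> C" using cC[of 0] c0 by linarith
  show ?thesis unfolding equiv_c0_basis_def
  proof (intro exI conjI allI impI)
    fix N :: nat and a :: "nat \<Rightarrow> real"
    assume "0 < N"
    define M where "M = (MAX k\<in>{..<N}. \<bar>a k\<bar>)"
    have M: "\<bar>a k\<bar> \<le> M" if "k < N" for k unfolding M_def using that by simp
    obtain j where j: "j < N" and aj: "\<bar>a j\<bar> = M"
      using Max_in[of "(\<lambda>k. \<bar>a k\<bar>) ` {..<N}"] \<open>0 < N\<close> unfolding M_def by fastforce
    have M0: "0 \<le> M" using aj by simp
    show "EX_norm xs (\<lambda>n. \<Sum>k<N. a k * v k n) \<le> (2 + C) * M"
    proof (rule EX_norm_le)
      fix m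
      have "EX_norm xs (v k) \<le> C" for k using cC[of k] by simp
      then show "norm (psum xs (\<lambda>n. \<Sum>k<N. a k * v k n) m) \<le> (2 + C) * M"
        using lincomb_psum_upper[OF block _ C0 small, of N a M m] M M0 by blast
    qed
    have "c * \<bar>a j\<bar> \<le> \<bar>a j\<bar> * EX_norm xs (v j)"
      using mult_right_mono[OF conjunct1[OF cC[of j]] abs_ge_zero[of "a j"]]
      by (simp add: mult.commute)
    then show "c / 2 * M \<le> EX_norm xs (\<lambda>n. \<Sum>k<N. a k * v k n)"
      using lincomb_EX_norm_lower[OF block j, of a xs] aj by simp
  qed (use c0 C0 in auto)
qed

end
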